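(* Let $s\ge1$ and $d\ge1$ be integers. There exists a $(0,1)$-matrix $M'$ with ${\rm br}_s(M')=d$ and $r(M')\cdot c(M')=\binom{d}{\le s}2^d$.
   Context: For a $(0,1)$-matrix $M$ of size $n\times m$, $M[i,j]$ denotes its $(i,j)$ entry and $[n]=\{1,\dots,n\}$. The $s$-binary rank ${\rm br}_s(M)$ is the minimal integer $d\ge 0$ such that there exist $d$ sets (rectangles) $I_k\times J_k$ with $I_k\subseteq[n]$, $J_k\subseteq[m]$, $k\in[d]$, with $M[i,j]=1$ for all $(i,j)\in I_k\times J_k$ and all $k$, and such that every $(i,j)$ with $M[i,j]=1$ lies in at least one and at most $s$ of the rectangles. $r(M)$ and $c(M)$ denote the numbers of distinct rows and distinct columns of $M$. $\binom{d}{\le s}=\sum_{i=0}^{s}\binom{d}{i}$. *)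

theory Defs
  imports Main
begin

text \<open>A (0,1)-matrix of size n x m is modelled as M :: nat => nat => bool
  with entries M i j for i in {1..n}, j in {1..m} (True = 1); entries outside
  the index range are ignored by all definitions below.\<close>

definition s_cover :: "nat \<Rightarrow> nat \<Rightarrow> nat \<Rightarrow> (nat \<Rightarrow> nat \<Rightarrow> bool) \<Rightarrow> nat
    \<Rightarrow> (nat \<Rightarrow> nat set) \<Rightarrow> (nat \<Rightarrow> nat set) \<Rightarrow> bool" where
  "s_cover s n m M d I J \<longleftrightarrow>
     (\<forall>k\<in>{1..d}. I k \<subseteq> {1..n} \<and> J k \<subseteq> {1..m} \<and> (\<forall>i\<in>I k. \<forall>j\<in>J k. M i j)) \<and>
     (\<forall>i\<in>{1..n}. \<forall>j\<in>{1..m}. M i j \<longrightarrow>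
        1 \<le> card {k\<in>{1..d}. i \<in> I k \<and> j \<in> J k} \<and>
        card {k\<in>{1..d}. i \<in> I k \<and> j \<in> J k} \<le> s)"

definition binary_rank_s :: "nat \<Rightarrow> nat \<Rightarrow> nat \<Rightarrow> (nat \<Rightarrow> nat \<Rightarrow> bool) \<Rightarrow> nat" where
  "binary_rank_s s n m M = (LEAST d. \<exists>I J. s_cover s n m M d I J)"

definition distinct_rows :: "nat \<Rightarrow> nat \<Rightarrow> (nat \<Rightarrow> nat \<Rightarrow> bool) \<Rightarrow> nat" where
  "distinct_rows n m M = card ((\<lambda>i. (\<lambda>j. if j \<in> {1..m} then M i j else False)) ` {1..n})"

definition distinct_cols :: "nat \<Rightarrow> nat \<Rightarrow> (nat \<Rightarrow> nat \<Rightarrow> bool) \<Rightarrow> nat" where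
  "distinct_cols n m M = card ((\<lambda>j. (\<lambda>i. if i \<in> {1..n} then M i j else False)) ` {1..m})"

definition choose_le :: "nat \<Rightarrow> nat \<Rightarrow> nat" where
  "choose_le d s = (\<Sum>i\<le>s. d choose i)"

end

theory Submission
  imports Defs
begin

text \<open>Index the rows by the subsets of \<open>{1..d}\<close> of size at most \<open>s\<close>, the columns by all
  subsets of \<open>{1..d}\<close>, and put a one where row and column set intersect. The rectangles
  \<open>{A. k \<in> A} \<times> {B. k \<in> B}\<close>, \<open>k \<in> {1..d}\<close>, cover the entry \<open>(A, B)\<close> exactly \<open>card (A \<inter> B) \<le> s\<close>
  times, so \<open>br\<^sub>s \<le> d\<close>. Conversely the entries \<open>({k}, {k})\<close> form a fooling set: no rectangle
  contains two of them, since \<open>{k} \<inter> {k'} = {}\<close> for \<open>k \<noteq> k'\<close>. The singletons also separate all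
  rows and all columns, so \<open>r \<cdot> c\<close> is the number of row sets times \<open>2 ^ d\<close>.\<close>

definition intersection_matrix :: "(nat \<Rightarrow> 'a set) \<Rightarrow> (nat \<Rightarrow> 'a set) \<Rightarrow> nat \<Rightarrow> nat \<Rightarrow> bool" where
  "intersection_matrix f g i j \<longleftrightarrow> f i \<inter> g j \<noteq> {}"

lemma intersection_matrix_transpose:
  "(\<lambda>j i. intersection_matrix f g i j) = intersection_matrix g f"
  by (auto simp: intersection_matrix_def fun_eq_iff)

lemma card_subsets_card_le:
  assumes "finite A"
  shows "card {B. B \<subseteq> A \<and> card B \<le> s} = (\<Sum>i\<le>s. card A choose i)"
proof -
  have "{B. B \<subseteq> A \<and> card B \<le> s} = (\<Union>i\<le>s. {B. B \<subseteq> A \<and> card B = i})"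
    by auto
  also have "card \<dots> = (\<Sum>i\<le>s. card {B. B \<subseteq> A \<and> card B = i})"
    using assms by (intro card_UN_disjoint) (auto intro: finite_subset[of _ "Pow A"])
  also have "\<dots> = (\<Sum>i\<le>s. card A choose i)"
    using n_subsets[OF assms] by simp
  finally show ?thesis .
qed

lemma distinct_cols_eq_distinct_rows_transpose:
  "distinct_cols n m M = distinct_rows m n (\<lambda>j i. M i j)"
  by (simp add: distinct_cols_def distinct_rows_def)

lemma distinct_rows_eq_if_separated:
  assumes "\<And>i i'. i \<in> {1..n} \<Longrightarrow> i' \<in> {1..n} \<Longrightarrow> i \<noteq> i' \<Longrightarrow> \<exists>j\<in>{1..m}. M i j \<noteq> M i' j"
  shows "distinct_rows n m M = n"
proof -
  have "inj_on (\<lambda>i j. if j \<in> {1..m} then M i j else False) {1..n}"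
  proof (rule inj_onI, rule ccontr)
    fix i i' assume "i \<in> {1..n}" "i' \<in> {1..n}" "i \<noteq> i'"
      and rows_eq: "(\<lambda>j. if j \<in> {1..m} then M i j else False) = (\<lambda>j. if j \<in> {1..m} then M i' j else False)"
    then obtain j where "j \<in> {1..m}" "M i j \<noteq> M i' j" using assms by blast
    then show False using fun_cong[OF rows_eq, of j] by simp
  qed
  then show ?thesis by (simp add: distinct_rows_def card_image)
qed

lemma distinct_rows_intersection_matrix:
  assumes "inj_on f {1..n}" and "f ` {1..n} \<subseteq> Pow U" and "(\<lambda>k. {k}) ` U \<subseteq> g ` {1..m}"
  shows "distinct_rows n m (intersection_matrix f g) = n"
proof (rule distinct_rows_eq_if_separated)
  fix i i' assume "i \<in> {1..n}" "i' \<in> {1..n}" "i \<noteq> i'"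
  then have "f i \<noteq> f i'" using assms(1) by (meson inj_onD)
  moreover have "f i \<subseteq> U" "f i' \<subseteq> U" using assms(2) \<open>i \<in> {1..n}\<close> \<open>i' \<in> {1..n}\<close> by blast+
  ultimately
  obtain k where "k \<in> U" "k \<in> f i \<longleftrightarrow> k \<notin> f i'" by blast
  moreover obtain j where "j \<in> {1..m}" "g j = {k}" using assms(3) \<open>k \<in> U\<close> by blast
  ultimately have "intersection_matrix f g i j \<noteq> intersection_matrix f g i' j"
    by (auto simp: intersection_matrix_def)
  with \<open>j \<in> {1..m}\<close>
  show "\<exists>j\<in>{1..m}. intersection_matrix f g i j \<noteq> intersection_matrix f g i' j" by blast
qed

lemma binary_rank_s_eqI:
  assumes "s_cover s n m M d I J" and "\<And>d' I' J'. s_cover s n m M d' I' J' \<Longrightarrow> d \<le> d'"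
  shows "binary_rank_s s n m M = d"
  unfolding binary_rank_s_def by (rule Least_equality) (use assms in auto)

text \<open>Only one of the two cross entries of a fooling pair needs to vanish here: two pairs
  in a common rectangle force both cross entries to be ones.\<close>

lemma s_cover_card_fooling_set_le:
  assumes cover: "s_cover s n m M d I J"
    and diag: "\<And>k. k \<in> K \<Longrightarrow> a k \<in> {1..n} \<and> b k \<in> {1..m} \<and> M (a k) (b k)"
    and cross: "\<And>k k'. k \<in> K \<Longrightarrow> k' \<in> K \<Longrightarrow> M (a k) (b k') \<Longrightarrow> k = k'"
  shows "card K \<le> d"
proof -
  have "\<exists>r\<in>{1..d}. a k \<in> I r \<and> b k \<in> J r" if "k \<in> K" for k
  proof -
    have "1 \<le> card {r\<in>{1..d}. a k \<in> I r \<and> b k \<in> J r}"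
      using cover diag[OF that] unfolding s_cover_def by blast
    then show ?thesis by (metis (no_types, lifting) card.empty empty_Collect_eq not_one_le_zero)
  qed
  then obtain r where r: "\<And>k. k \<in> K \<Longrightarrow> r k \<in> {1..d} \<and> a k \<in> I (r k) \<and> b k \<in> J (r k)"
    by metis
  have "inj_on r K"
  proof (rule inj_onI)
    fix k k' assume "k \<in> K" "k' \<in> K" "r k = r k'"
    then have "M (a k) (b k')" using cover r[of k] r[of k'] unfolding s_cover_def by auto
    then show "k = k'" using cross \<open>k \<in> K\<close> \<open>k' \<in> K\<close> by blast
  qed
  with r have "card K \<le> card {1..d}" by (intro card_inj_on_le) auto
  then show ?thesis by simp
qed

lemma s_cover_intersection_matrix:
  assumes "\<And>i. i \<in> {1..n} \<Longrightarrow> f i \<subseteq> {1..d} \<and> card (f i) \<le> s"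
  shows "s_cover s n m (intersection_matrix f g) d
           (\<lambda>k. {i\<in>{1..n}. k \<in> f i}) (\<lambda>k. {j\<in>{1..m}. k \<in> g j})"
  unfolding s_cover_def
proof (intro conjI ballI impI)
  fix i j assume i: "i \<in> {1..n}" and "j \<in> {1..m}" and "intersection_matrix f g i j"
  then have "{k\<in>{1..d}. i \<in> {i\<in>{1..n}. k \<in> f i} \<and> j \<in> {j\<in>{1..m}. k \<in> g j}} = f i \<inter> g j"
    and "f i \<inter> g j \<noteq> {}"
    using assms[OF i] by (auto simp: intersection_matrix_def)
  moreover have "finite (f i)" using assms[OF i] finite_subset by blast
  ultimately show "1 \<le> card {k\<in>{1..d}. i \<in> {i\<in>{1..n}. k \<in> f i} \<and> j \<in> {j\<in>{1..m}. k \<in> g j}}"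
    and "card {k\<in>{1..d}. i \<in> {i\<in>{1..n}. k \<in> f i} \<and> j \<in> {j\<in>{1..m}. k \<in> g j}} \<le> s"
    using assms[OF i] card_mono[of "f i" "f i \<inter> g j"] by (auto simp: Suc_le_eq)
qed (auto simp: intersection_matrix_def)

lemma s_cover_intersection_matrix_card_le:
  assumes "s_cover s n m (intersection_matrix f g) d I J"
    and "(\<lambda>k. {k}) ` U \<subseteq> f ` {1..n}" and "(\<lambda>k. {k}) ` U \<subseteq> g ` {1..m}"
  shows "card U \<le> d"
proof -
  have "\<forall>k\<in>U. \<exists>i\<in>{1..n}. f i = {k}" "\<forall>k\<in>U. \<exists>j\<in>{1..m}. g j = {k}"
    using assms(2,3) unfolding image_subset_iff by (metis imageE)+
  then obtain a b where a: "\<And>k. k \<in> U \<Longrightarrow> a k \<in> {1..n} \<and> f (a k) = {k}"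
    and b: "\<And>k. k \<in> U \<Longrightarrow> b k \<in> {1..m} \<and> g (b k) = {k}"
    by (metis (no_types))
  show ?thesis
    by (rule s_cover_card_fooling_set_le[OF assms(1), of U a b])
      (use a b in \<open>auto simp: intersection_matrix_def\<close>)
qed

lemma binary_rank_s_intersection_matrix:
  assumes "\<And>i. i \<in> {1..n} \<Longrightarrow> f i \<subseteq> {1..d} \<and> card (f i) \<le> s"
    and "(\<lambda>k. {k}) ` {1..d} \<subseteq> f ` {1..n}" and "(\<lambda>k. {k}) ` {1..d} \<subseteq> g ` {1..m}"
  shows "binary_rank_s s n m (intersection_matrix f g) = d"
proof (rule binary_rank_s_eqI)
  show "s_cover s n m (intersection_matrix f g) d
          (\<lambda>k. {i\<in>{1..n}. k \<in> f i}) (\<lambda>k. {j\<in>{1..m}. k \<in> g j})"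
    using assms(1) by (rule s_cover_intersection_matrix)
  fix d' I' J' assume "s_cover s n m (intersection_matrix f g) d' I' J'"
  from s_cover_intersection_matrix_card_le[OF this assms(2,3)] show "d \<le> d'" by simp
qed

theorem lemma5:
  fixes s d :: nat
  assumes "s \<ge> 1" and "d \<ge> 1"
  shows "\<exists>n m (M :: nat \<Rightarrow> nat \<Rightarrow> bool).
           binary_rank_s s n m M = d \<and>
           distinct_rows n m M * distinct_cols n m M = choose_le d s * 2 ^ d"
proof -
  define Rows where "Rows = {A. A \<subseteq> {1..d} \<and> card A \<le> s}"
  define Cols where "Cols = Pow {1..d}"
  have "finite Rows" unfolding Rows_def by (rule finite_subset[of _ "Pow {1..d}"]) auto
  then obtain f where f: "bij_betw f {1..card Rows} Rows" using ex_bij_betw_nat_finite_1 by blast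
  obtain g where g: "bij_betw g {1..card Cols} Cols"
    using ex_bij_betw_nat_finite_1[of Cols] by (auto simp: Cols_def)
  define M where "M = intersection_matrix f g"
  have singletons: "(\<lambda>k. {k}) ` {1..d} \<subseteq> Rows" "(\<lambda>k. {k}) ` {1..d} \<subseteq> Cols"
    using assms(1) by (auto simp: Rows_def Cols_def)
  have "binary_rank_s s (card Rows) (card Cols) M = d"
    unfolding M_def using f g singletons
    by (intro binary_rank_s_intersection_matrix) (auto simp: bij_betw_def Rows_def)
  moreover have "distinct_rows (card Rows) (card Cols) M = card Rows"
    unfolding M_def using f g singletons
    by (intro distinct_rows_intersection_matrix) (auto simp: bij_betw_def Rows_def)
  moreover have "distinct_cols (card Rows) (card Cols) M = card Cols"
    unfolding M_def distinct_cols_eq_distinct_rows_transpose intersection_matrix_transpose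
    using f g singletons
    by (intro distinct_rows_intersection_matrix) (auto simp: bij_betw_def Cols_def Rows_def)
  moreover have "card Rows = choose_le d s" "card Cols = 2 ^ d"
    by (simp_all add: Rows_def Cols_def card_subsets_card_le choose_le_def card_Pow)
  ultimately show ?thesis by metis
qed

end
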